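(* (1) If $t\in\mathtt m$, then there exist an environment $\Gamma$ and a type $\sigma$ such that $\Gamma\vdash t:\sigma$ is derivable in $\cap J$. (2) If $t\in\mathtt m_{var}$, then for every type $\sigma$ there exists an environment $\Gamma$ such that $\Gamma\vdash t:\sigma$ is derivable in $\cap J$.
   Context: Terms $\mathtt T_J$: $t,u,r ::= x \mid \lambda x.t \mid t(u,y.r)$ ($y$ bound in $r$), up to $\alpha$-equivalence. The sets $\mathtt m_{var}$ and $\mathtt m$ are generated by $\mathtt m_{var} ::= x \mid \mathtt m_{var}(\mathtt m, y.\mathtt m_{var})$ and $\mathtt m ::= x \mid \lambda x.\mathtt m \mid \mathtt m_{var}(\mathtt m, y.\mathtt m)$. System $\cap J$: types $\sigma,\tau ::= \alpha \mid \mathcal M\to\sigma$, $\mathcal M=[\sigma_i]_{i\in I}$ a finite possibly empty multiset; $\sqcup$ multiset union; environments map variables to multisets, $\wedge$ pointwise union, $\Gamma;x:\mathcal M$ extension with $x\notin\mathrm{dom}\,\Gamma$. $\mathrm{ch}(\mathcal M)=\mathcal M$ if $\mathcal M\ne[\,]$, $\mathrm{ch}([\,])=[\tau]$ for an arbitrary $\tau$. Rules: (var) $x:[\sigma]\vdash x:\sigma$; (abs) from $\Gamma;x:\mathcal M\vdash t:\sigma$ infer $\Gamma\vdash\lambda x.t:\mathcal M\to\sigma$; (many) from $(\Gamma_i\vdash t:\sigma_i)_{i\in I}$, $I\ne\emptyset$, infer $\wedge_i\Gamma_i\vdash t:[\sigma_i]_{i\in I}$; (app) from $\Gamma\vdash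 t:\mathrm{ch}([\mathcal M_i\to\tau_i]_{i\in I})$, $\Delta\vdash u:\mathrm{ch}(\sqcup_i\mathcal M_i)$, $\Lambda;y:[\tau_i]_{i\in I}\vdash r:\sigma$ infer $\Gamma\wedge\Delta\wedge\Lambda\vdash t(u,y.r):\sigma$. *)

theory Defs
  imports Main "HOL-Library.Multiset"
begin

type_synonym var = nat

text \<open>Raw named terms of the calculus T_J: x, \<lambda>x.t, t(u,y.r) with y bound in r.\<close>
datatype trm = Var var | Lam var trm | App trm trm var trm

inductive mvar :: "trm \<Rightarrow> bool" and mnf :: "trm \<Rightarrow> bool" where
  mvar_var: "mvar (Var x)"
| mvar_app: "mvar t \<Longrightarrow> mnf u \<Longrightarrow> mvar r \<Longrightarrow> mvar (App t u y r)"
| mnf_var: "mnf (Var x)"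
| mnf_lam: "mnf t \<Longrightarrow> mnf (Lam x t)"
| mnf_app: "mvar t \<Longrightarrow> mnf u \<Longrightarrow> mnf r \<Longrightarrow> mnf (App t u y r)"

datatype ty = Atom nat | Arr "ty multiset" ty

type_synonym env = "var \<Rightarrow> ty multiset"

definition env_union :: "env \<Rightarrow> env \<Rightarrow> env" where
  "env_union \<Gamma> \<Delta> = (\<lambda>x. \<Gamma> x + \<Delta> x)"

definition env_sum :: "env list \<Rightarrow> env" where
  "env_sum \<Gamma>s = (\<lambda>x. sum_list (map (\<lambda>\<Gamma>. \<Gamma> x) \<Gamma>s))"

text \<open>is_ch M M' : M' is a possible value of ch(M) (ch([]) = [\<tau>] for an arbitrary \<tau>).\<close>
definition is_ch :: "ty multiset \<Rightarrow> ty multiset \<Rightarrow> bool" where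
  "is_ch M M' \<longleftrightarrow> (M \<noteq> {#} \<and> M' = M) \<or> (M = {#} \<and> (\<exists>\<tau>. M' = {#\<tau>#}))"

text \<open>Rule (abs) is phrased as: from \<Gamma> \<turnstile> t : \<sigma> infer
  \<Gamma>(x:=[]) \<turnstile> \<lambda>x.t : \<Gamma>(x) \<rightarrow> \<sigma>, i.e. with \<Gamma> = \<Gamma>0;x:M where \<Gamma>0 = \<Gamma>(x:=[]), M = \<Gamma> x.
  Similarly for y in (app). The family [M_i \<rightarrow> \<tau>_i]_{i\<in>I} is given by a multiset A of pairs.\<close>
inductive typed :: "env \<Rightarrow> trm \<Rightarrow> ty \<Rightarrow> bool"
  and typedm :: "env \<Rightarrow> trm \<Rightarrow> ty multiset \<Rightarrow> bool" where
  t_var: "typed (\<lambda>z. if z = x then {#\<sigma>#} else {#}) (Var x) \<sigma>"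
| t_abs: "typed \<Gamma> t \<sigma> \<Longrightarrow> typed (\<Gamma>(x := {#})) (Lam x t) (Arr (\<Gamma> x) \<sigma>)"
| t_many: "ps \<noteq> [] \<Longrightarrow> (\<forall>i<length ps. typed (fst (ps ! i)) t (snd (ps ! i)))
           \<Longrightarrow> typedm (env_sum (map fst ps)) t (mset (map snd ps))"
| t_app: "is_ch (image_mset (\<lambda>(M, \<tau>). Arr M \<tau>) A) M1 \<Longrightarrow> typedm \<Gamma> t M1
          \<Longrightarrow> is_ch (sum_mset (image_mset fst A)) M2 \<Longrightarrow> typedm \<Delta> u M2
          \<Longrightarrow> typed \<Lambda> r \<sigma> \<Longrightarrow> \<Lambda> y = image_mset snd A
          \<Longrightarrow> typed (env_union \<Gamma> (env_union \<Delta> (\<Lambda>(y := {#})))) (App t u y r) \<sigma>"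

end

theory Submission
  imports Defs
begin

text \<open>Every term of m_var can be given any type: a variable trivially, and in
  t(u, y.r) one types the body r at the desired type and instantiates rule (app) with
  the family [[] \<rightarrow> \<tau>]_{\<tau> \<in> \<Lambda>(y)}. Then ch turns the empty union of argument
  multisets into [\<tau>'] for an arbitrary type \<tau>' of u, and ch of the (possibly empty)
  family of arrow types is a nonempty multiset, each of whose members the head t of
  m_var admits. Terms of m are typable by the same construction, using (abs) for
  abstractions.\<close>

lemma is_ch_self: "M \<noteq> {#} \<Longrightarrow> is_ch M M"
  by (simp add: is_ch_def)

lemma is_ch_empty: "is_ch {#} {#\<tau>#}"
  by (simp add: is_ch_def)

lemma typedm_singleton: "typed \<Gamma> t \<sigma> \<Longrightarrow> typedm \<Gamma> t {#\<sigma>#}"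
  using t_many[of "[(\<Gamma>, \<sigma>)]" t] by (simp add: env_sum_def)

lemma typedm_if_typed_all:
  assumes typed_all: "\<forall>\<sigma>. \<exists>\<Gamma>. typed \<Gamma> t \<sigma>" and "M \<noteq> {#}"
  shows "\<exists>\<Gamma>. typedm \<Gamma> t M"
proof -
  obtain f where f: "\<And>\<sigma>. typed (f \<sigma>) t \<sigma>" using typed_all by metis
  obtain xs where xs: "mset xs = M" using ex_mset by blast
  define ps where "ps = map (\<lambda>\<sigma>. (f \<sigma>, \<sigma>)) xs"
  have "typedm (env_sum (map fst ps)) t (mset (map snd ps))"
  proof (rule t_many)
    show "ps \<noteq> []" using \<open>M \<noteq> {#}\<close> xs ps_def by auto
    show "\<forall>i<length ps. typed (fst (ps ! i)) t (snd (ps ! i))" using f ps_def by simp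
  qed
  moreover have "mset (map snd ps) = M" using xs ps_def by (simp add: comp_def)
  ultimately show ?thesis by auto
qed

lemma typedm_ch_if_typed_all:
  assumes "\<forall>\<sigma>. \<exists>\<Gamma>. typed \<Gamma> t \<sigma>"
  shows "\<exists>M' \<Gamma>. is_ch M M' \<and> typedm \<Gamma> t M'"
proof (cases "M = {#}")
  case True
  obtain \<Gamma> where "typed \<Gamma> t (Atom 0)" using assms by blast
  then show ?thesis using True is_ch_empty typedm_singleton by blast
next
  case False
  then show ?thesis using is_ch_self typedm_if_typed_all[OF assms] by blast
qed

lemma typed_App_if_typed_all:
  assumes "\<forall>\<sigma>. \<exists>\<Gamma>. typed \<Gamma> t \<sigma>" and "typed \<Delta> u \<tau>" and "typed \<Lambda> r \<sigma>"
  shows "\<exists>\<Gamma>'. typed \<Gamma>' (App t u y r) \<sigma>"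
proof -
  define A :: "(ty multiset \<times> ty) multiset"
    where "A = image_mset (\<lambda>\<tau>. ({#}, \<tau>)) (\<Lambda> y)"
  have y_types: "\<Lambda> y = image_mset snd A"
    unfolding A_def by (simp add: multiset.map_comp comp_def)
  have "sum_mset (image_mset fst A) = {#}"
    unfolding A_def by (simp add: multiset.map_comp comp_def)
  then have ch_args: "is_ch (sum_mset (image_mset fst A)) {#\<tau>#}"
    using is_ch_empty by metis
  obtain M1 \<Gamma> where "is_ch (image_mset (\<lambda>(M, \<tau>). Arr M \<tau>) A) M1" and "typedm \<Gamma> t M1"
    using typedm_ch_if_typed_all[OF assms(1)] by blast
  from t_app[OF this ch_args typedm_singleton[OF assms(2)] assms(3) y_types]
  show ?thesis by blast
qed

lemma mvar_typed_all_and_mnf_typed: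
  shows "mvar t \<Longrightarrow> \<forall>\<sigma>. \<exists>\<Gamma>. typed \<Gamma> t \<sigma>"
    and "mnf s \<Longrightarrow> \<exists>\<Gamma> \<sigma>. typed \<Gamma> s \<sigma>"
proof (induction t and s rule: mvar_mnf.inducts)
  case (mvar_var x)
  show ?case using t_var by blast
next
  case (mvar_app t u r y)
  then show ?case using typed_App_if_typed_all by meson
next
  case (mnf_var x)
  show ?case using t_var by blast
next
  case (mnf_lam t x)
  then show ?case using t_abs by blast
next
  case (mnf_app t u r y)
  then show ?case using typed_App_if_typed_all by meson
qed

theorem mainTheorem12:
  shows "(\<forall>t. mnf t \<longrightarrow> (\<exists>\<Gamma> \<sigma>. typed \<Gamma> t \<sigma>))
       \<and> (\<forall>t. mvar t \<longrightarrow> (\<forall>\<sigma>. \<exists>\<Gamma>. typed \<Gamma> t \<sigma>))"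
  using mvar_typed_all_and_mnf_typed by blast

end
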